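(* Let $R$ be a commutative unital ring and equip $\mathfrak{FdgMod}_R$ with the model structure whose weak equivalences are the maps $f$ with $H^n(F^pf)$ an isomorphism for all $n\in\mathbb Z,p\in\mathbb N$, with generating cofibrations $I=\{S_R(n+1,p)\to D_R(n,p)\}$ and generating trivial cofibrations $J=\{0\to D_R(n,p)\}$. Then a morphism $p:(M,F)\to(N,F)$ is a trivial fibration if and only if, for every $k\in\mathbb N$, $F^kp:F^kM\to F^kN$ is degreewise surjective with acyclic kernel. In particular, $W\cap J\text{-inj}=I\text{-inj}$, where $W$ is the class of weak equivalences, $J$-inj the class of maps having the right lifting property with respect to $J$, and $I$-inj the class of maps having the right lifting property with respect to $I$.
   Context: $\mathfrak{FdgMod}_R$: filtered cochain complexes $(M,F)$ of $R$-modules, i.e. complexes with decreasing filtrations by subcomplexes $F^kM$ ($k\in\mathbb N$, $F^0M=M$), with filtration-preserving cochain maps. $D_R(n)$: $R$ in degrees $n,n+1$ with identity differential; $S_R(n)$: $R$ in degree $n$; $D_R(n,p)$, $S_R(n,p)$: these complexes filtered by $F^k=$ whole complex for $k\le p$ and $0$ for $k>p$; $S_R(n+1,p)\to D_R(n,p)$ the inclusion in degree $n+1$. *)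

theory Defs
  imports Main "HOL.Modules"
begin

text \<open>The complex lives inside an ambient R-module
(type 'm with scalar multiplication fc_scale); its degree-n component is the
submodule fc_mod n, its differential in degree n is fc_d n (only relevant on
fc_mod n), and F^k of the complex in degree n is fc_filt k n.\<close>

record ('r, 'm) fcomplex =
  fc_scale :: "'r \<Rightarrow> 'm \<Rightarrow> 'm"
  fc_mod   :: "int \<Rightarrow> 'm set"
  fc_d     :: "int \<Rightarrow> 'm \<Rightarrow> 'm"
  fc_filt  :: "nat \<Rightarrow> int \<Rightarrow> 'm set"

definition linear_on ::
  "('r::comm_ring_1 \<Rightarrow> 'a::ab_group_add \<Rightarrow> 'a) \<Rightarrow> ('r \<Rightarrow> 'b::ab_group_add \<Rightarrow> 'b)
    \<Rightarrow> 'a set \<Rightarrow> ('a \<Rightarrow> 'b) \<Rightarrow> bool" where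
  "linear_on s1 s2 A f \<longleftrightarrow>
     (\<forall>x\<in>A. \<forall>y\<in>A. f (x + y) = f x + f y) \<and> (\<forall>c. \<forall>x\<in>A. f (s1 c x) = s2 c (f x))"

definition submod :: "('r \<Rightarrow> 'm::ab_group_add \<Rightarrow> 'm) \<Rightarrow> 'm set \<Rightarrow> bool" where
  "submod s S \<longleftrightarrow> 0 \<in> S \<and> (\<forall>x\<in>S. \<forall>y\<in>S. x + y \<in> S) \<and> (\<forall>c. \<forall>x\<in>S. s c x \<in> S)"

definition is_fcomplex :: "('r::comm_ring_1, 'm::ab_group_add) fcomplex \<Rightarrow> bool" where
  "is_fcomplex M \<longleftrightarrow>
     module (fc_scale M) \<and>
     (\<forall>n. submod (fc_scale M) (fc_mod M n)) \<and>
     (\<forall>n. linear_on (fc_scale M) (fc_scale M) (fc_mod M n) (fc_d M n)) \<and>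
     (\<forall>n. \<forall>x\<in>fc_mod M n. fc_d M n x \<in> fc_mod M (n + 1)) \<and>
     (\<forall>n. \<forall>x\<in>fc_mod M n. fc_d M (n + 1) (fc_d M n x) = 0) \<and>
     (\<forall>n. fc_filt M 0 n = fc_mod M n) \<and>
     (\<forall>k n. submod (fc_scale M) (fc_filt M k n)) \<and>
     (\<forall>k n. fc_filt M (Suc k) n \<subseteq> fc_filt M k n) \<and>
     (\<forall>k n. \<forall>x\<in>fc_filt M k n. fc_d M n x \<in> fc_filt M k (n + 1))"

text \<open>Morphisms of filtered complexes: degreewise R-linear, commuting with the
differentials, filtration preserving.  Only the values on the components matter.\<close>

definition is_fhom ::
  "('r::comm_ring_1, 'a::ab_group_add) fcomplex \<Rightarrow> ('r, 'b::ab_group_add) fcomplex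
     \<Rightarrow> (int \<Rightarrow> 'a \<Rightarrow> 'b) \<Rightarrow> bool" where
  "is_fhom M N f \<longleftrightarrow>
     (\<forall>n. linear_on (fc_scale M) (fc_scale N) (fc_mod M n) (f n)) \<and>
     (\<forall>n. \<forall>x\<in>fc_mod M n. f n x \<in> fc_mod N n) \<and>
     (\<forall>n. \<forall>x\<in>fc_mod M n. f (n + 1) (fc_d M n x) = fc_d N n (f n x)) \<and>
     (\<forall>k n. \<forall>x\<in>fc_filt M k n. f n x \<in> fc_filt N k n)"

definition has_rlp ::
  "('r::comm_ring_1, 'c::ab_group_add) fcomplex \<Rightarrow> ('r, 'd::ab_group_add) fcomplex
     \<Rightarrow> (int \<Rightarrow> 'c \<Rightarrow> 'd)
   \<Rightarrow> ('r, 'a::ab_group_add) fcomplex \<Rightarrow> ('r, 'b::ab_group_add) fcomplex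
     \<Rightarrow> (int \<Rightarrow> 'a \<Rightarrow> 'b) \<Rightarrow> bool" where
  "has_rlp A B i M N p \<longleftrightarrow>
     (\<forall>a b. is_fhom A M a \<and> is_fhom B N b \<and>
            (\<forall>n. \<forall>x\<in>fc_mod A n. p n (a n x) = b n (i n x)) \<longrightarrow>
        (\<exists>h. is_fhom B M h \<and>
             (\<forall>n. \<forall>x\<in>fc_mod A n. h n (i n x) = a n x) \<and>
             (\<forall>n. \<forall>y\<in>fc_mod B n. p n (h n y) = b n y)))"

definition D_cpx :: "int \<Rightarrow> nat \<Rightarrow> ('r::comm_ring_1, 'r) fcomplex" where
  "D_cpx n p = \<lparr> fc_scale = (*),
     fc_mod = (\<lambda>m. if m = n \<or> m = n + 1 then UNIV else {0}),
     fc_d = (\<lambda>m x. if m = n then x else 0),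
     fc_filt = (\<lambda>k m. if k \<le> p \<and> (m = n \<or> m = n + 1) then UNIV else {0}) \<rparr>"

definition S_cpx :: "int \<Rightarrow> nat \<Rightarrow> ('r::comm_ring_1, 'r) fcomplex" where
  "S_cpx n p = \<lparr> fc_scale = (*),
     fc_mod = (\<lambda>m. if m = n then UNIV else {0}),
     fc_d = (\<lambda>m x. 0),
     fc_filt = (\<lambda>k m. if k \<le> p \<and> m = n then UNIV else {0}) \<rparr>"

definition zero_cpx :: "('r::comm_ring_1, 'r) fcomplex" where
  "zero_cpx = \<lparr> fc_scale = (*), fc_mod = (\<lambda>m. {0}), fc_d = (\<lambda>m x. 0),
     fc_filt = (\<lambda>k m. {0}) \<rparr>"

text \<open>I-inj and J-inj.  The generating maps are the inclusion S_R(n+1,p) \<rightarrow> D_R(n,p)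
(identity in degree n+1) and 0 \<rightarrow> D_R(n,p).\<close>

definition I_inj :: "('r::comm_ring_1, 'a::ab_group_add) fcomplex \<Rightarrow> ('r, 'b::ab_group_add) fcomplex
     \<Rightarrow> (int \<Rightarrow> 'a \<Rightarrow> 'b) \<Rightarrow> bool" where
  "I_inj M N f \<longleftrightarrow>
     (\<forall>n p. has_rlp (S_cpx (n + 1) p :: ('r, 'r) fcomplex) (D_cpx n p) (\<lambda>m x. x) M N f)"

definition J_inj :: "('r::comm_ring_1, 'a::ab_group_add) fcomplex \<Rightarrow> ('r, 'b::ab_group_add) fcomplex
     \<Rightarrow> (int \<Rightarrow> 'a \<Rightarrow> 'b) \<Rightarrow> bool" where
  "J_inj M N f \<longleftrightarrow>
     (\<forall>n p. has_rlp (zero_cpx :: ('r, 'r) fcomplex) (D_cpx n p) (\<lambda>m x. 0) M N f)"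

text \<open>The map
induced on H^n(F^k M) = Z/B is bijective iff it is surjective on classes and
injective on classes, spelled out with cocycles and coboundaries.\<close>

definition cocycles :: "('r, 'm::ab_group_add) fcomplex \<Rightarrow> nat \<Rightarrow> int \<Rightarrow> 'm set" where
  "cocycles M k n = {x \<in> fc_filt M k n. fc_d M n x = 0}"

definition coboundaries :: "('r, 'm) fcomplex \<Rightarrow> nat \<Rightarrow> int \<Rightarrow> 'm set" where
  "coboundaries M k n = fc_d M (n - 1) ` fc_filt M k (n - 1)"

definition H_iso :: "('r, 'a::ab_group_add) fcomplex \<Rightarrow> ('r, 'b::ab_group_add) fcomplex
     \<Rightarrow> (int \<Rightarrow> 'a \<Rightarrow> 'b) \<Rightarrow> nat \<Rightarrow> int \<Rightarrow> bool" where
  "H_iso M N f k n \<longleftrightarrow>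
     (\<forall>z\<in>cocycles N k n. \<exists>x\<in>cocycles M k n. f n x - z \<in> coboundaries N k n) \<and>
     (\<forall>x\<in>cocycles M k n. f n x \<in> coboundaries N k n \<longrightarrow> x \<in> coboundaries M k n)"

definition weak_equiv :: "('r, 'a::ab_group_add) fcomplex \<Rightarrow> ('r, 'b::ab_group_add) fcomplex
     \<Rightarrow> (int \<Rightarrow> 'a \<Rightarrow> 'b) \<Rightarrow> bool" where
  "weak_equiv M N f \<longleftrightarrow> (\<forall>n k. H_iso M N f k n)"

text \<open>In the model structure (cofibrantly generated by I, J), fibrations are J-inj,
so trivial fibrations are the weak equivalences in J-inj.\<close>

definition trivial_fibration :: "('r::comm_ring_1, 'a::ab_group_add) fcomplex
     \<Rightarrow> ('r, 'b::ab_group_add) fcomplex \<Rightarrow> (int \<Rightarrow> 'a \<Rightarrow> 'b) \<Rightarrow> bool" where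
  "trivial_fibration M N f \<longleftrightarrow> weak_equiv M N f \<and> J_inj M N f"

definition surj_acyclic_kernel :: "('r, 'a::ab_group_add) fcomplex \<Rightarrow> ('r, 'b::ab_group_add) fcomplex
     \<Rightarrow> (int \<Rightarrow> 'a \<Rightarrow> 'b) \<Rightarrow> nat \<Rightarrow> bool" where
  "surj_acyclic_kernel M N f k \<longleftrightarrow>
     (\<forall>n. f n ` fc_filt M k n = fc_filt N k n) \<and>
     (\<forall>n. \<forall>x\<in>fc_filt M k n. f n x = 0 \<and> fc_d M n x = 0 \<longrightarrow>
        (\<exists>y\<in>fc_filt M k (n - 1). f (n - 1) y = 0 \<and> fc_d M (n - 1) y = x))"

end

theory Submission
  imports Defs
begin

text \<open>
  A morphism out of \<open>D\<^sub>R(n,p)\<close> is the same as an element of \<open>F\<^sup>pM\<^sup>n\<close> (the image of the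
  generator \<open>1\<close> in degree \<open>n\<close>), and a morphism out of \<open>S\<^sub>R(n+1,p)\<close> is the same as a cocycle
  in \<open>F\<^sup>pM\<^sup>n\<^sup>+\<^sup>1\<close>. Hence \<open>f\<close> lifts against \<open>0 \<rightarrow> D\<^sub>R(n,p)\<close> for all \<open>n, p\<close> iff every \<open>F\<^sup>pf\<close> is
  degreewise surjective, and \<open>f\<close> lifts against \<open>S\<^sub>R(n+1,p) \<rightarrow> D\<^sub>R(n,p)\<close> iff every cocycle
  \<open>z \<in> F\<^sup>pM\<^sup>n\<^sup>+\<^sup>1\<close> with \<open>f z = d y\<close>, \<open>y \<in> F\<^sup>pN\<^sup>n\<close>, is \<open>d x\<close> for some \<open>x \<in> F\<^sup>pM\<^sup>n\<close> with \<open>f x = y\<close>.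
  A diagram chase shows that this lifting condition holds iff \<open>F\<^sup>pf\<close> is surjective with acyclic
  kernel, and for a surjection the kernel is acyclic iff \<open>H\<^sup>*(F\<^sup>pf)\<close> is bijective (the long
  exact sequence of \<open>0 \<rightarrow> ker \<rightarrow> F\<^sup>pM \<rightarrow> F\<^sup>pN \<rightarrow> 0\<close>, chased by hand).
\<close>

section \<open>Filtered complexes and their morphisms\<close>

lemma linear_on_zero: "linear_on s1 s2 A f \<Longrightarrow> 0 \<in> A \<Longrightarrow> f 0 = 0"
  unfolding linear_on_def by (metis add.right_neutral add_left_imp_eq)

lemma linear_on_diff:
  assumes "linear_on s1 s2 A f" "module.subspace s1 A" "module s1" "x \<in> A" "y \<in> A"
  shows "f (x - y) = f x - f y"
proof -
  have "x - y \<in> A"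
    using assms(2-) by (simp add: module.subspace_diff)
  then have "f (x - y) + f y = f x"
    using assms(1,5) unfolding linear_on_def by (metis diff_add_cancel)
  then show ?thesis by (simp add: eq_diff_eq)
qed

locale fcomplex =
  fixes M :: "('r::comm_ring_1, 'm::ab_group_add) fcomplex"
  assumes fcomplex: "is_fcomplex M"
begin

sublocale scale: module "fc_scale M"
  using fcomplex by (simp add: is_fcomplex_def)

lemma subspace_filt: "scale.subspace (fc_filt M k n)"
  using fcomplex by (simp add: is_fcomplex_def submod_def scale.subspace_def)

lemma filt_0 [simp]: "fc_filt M 0 n = fc_mod M n"
  using fcomplex by (simp add: is_fcomplex_def)

lemma subspace_mod: "scale.subspace (fc_mod M n)"
  using subspace_filt[of 0 n] by simp

lemma filt_zero [simp]: "0 \<in> fc_filt M k n"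
  and filt_add: "x \<in> fc_filt M k n \<Longrightarrow> y \<in> fc_filt M k n \<Longrightarrow> x + y \<in> fc_filt M k n"
  and filt_diff: "x \<in> fc_filt M k n \<Longrightarrow> y \<in> fc_filt M k n \<Longrightarrow> x - y \<in> fc_filt M k n"
  and filt_scale: "x \<in> fc_filt M k n \<Longrightarrow> fc_scale M c x \<in> fc_filt M k n"
  using subspace_filt by (auto intro: scale.subspace_0 scale.subspace_add scale.subspace_diff
      scale.subspace_scale)

lemma filt_antimono: "k \<le> l \<Longrightarrow> fc_filt M l n \<subseteq> fc_filt M k n"
proof (induction l)
  case (Suc l)
  then show ?case
    using fcomplex unfolding is_fcomplex_def by (metis le_SucE order_refl subset_trans)
qed simp

lemma filt_mod: "x \<in> fc_filt M k n \<Longrightarrow> x \<in> fc_mod M n"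
  using filt_antimono[of 0 k n] by auto

lemma linear_d: "linear_on (fc_scale M) (fc_scale M) (fc_mod M n) (fc_d M n)"
  using fcomplex by (simp add: is_fcomplex_def)

lemma d_zero [simp]: "fc_d M n 0 = 0"
  using linear_on_zero[OF linear_d] scale.subspace_0[OF subspace_mod] .

lemma d_add: "x \<in> fc_mod M n \<Longrightarrow> y \<in> fc_mod M n \<Longrightarrow> fc_d M n (x + y) = fc_d M n x + fc_d M n y"
  and d_scale: "x \<in> fc_mod M n \<Longrightarrow> fc_d M n (fc_scale M c x) = fc_scale M c (fc_d M n x)"
  using linear_d by (simp_all add: linear_on_def)

lemma d_diff: "x \<in> fc_mod M n \<Longrightarrow> y \<in> fc_mod M n \<Longrightarrow> fc_d M n (x - y) = fc_d M n x - fc_d M n y"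
  by (rule linear_on_diff[OF linear_d subspace_mod scale.module_axioms])

lemma d_filt: "x \<in> fc_filt M k n \<Longrightarrow> fc_d M n x \<in> fc_filt M k (n + 1)"
  and d_d: "x \<in> fc_mod M n \<Longrightarrow> fc_d M (n + 1) (fc_d M n x) = 0"
  using fcomplex by (auto simp: is_fcomplex_def)

lemma d_mod: "x \<in> fc_mod M n \<Longrightarrow> fc_d M n x \<in> fc_mod M (n + 1)"
  using d_filt[of x 0 n] by simp

lemma coboundaries_succ: "coboundaries M k (n + 1) = fc_d M n ` fc_filt M k n"
  by (simp add: coboundaries_def)

lemma zero_coboundaries [simp]: "0 \<in> coboundaries M k n"
  unfolding coboundaries_def by (metis d_zero filt_zero image_eqI)

end

locale fhom = M: fcomplex M + N: fcomplex N
  for M :: "('r::comm_ring_1, 'a::ab_group_add) fcomplex"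
    and N :: "('r, 'b::ab_group_add) fcomplex" +
  fixes f :: "int \<Rightarrow> 'a \<Rightarrow> 'b"
  assumes fhom: "is_fhom M N f"
begin

lemma linear_f: "linear_on (fc_scale M) (fc_scale N) (fc_mod M n) (f n)"
  using fhom by (simp add: is_fhom_def)

lemma f_zero [simp]: "f n 0 = 0"
  by (intro linear_on_zero[OF linear_f] M.scale.subspace_0 M.subspace_mod)

lemma f_add: "x \<in> fc_mod M n \<Longrightarrow> y \<in> fc_mod M n \<Longrightarrow> f n (x + y) = f n x + f n y"
  and f_scale: "x \<in> fc_mod M n \<Longrightarrow> f n (fc_scale M c x) = fc_scale N c (f n x)"
  using linear_f by (simp_all add: linear_on_def)

lemma f_diff: "x \<in> fc_mod M n \<Longrightarrow> y \<in> fc_mod M n \<Longrightarrow> f n (x - y) = f n x - f n y"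
  by (rule linear_on_diff[OF linear_f M.subspace_mod M.scale.module_axioms])

lemma f_filt: "x \<in> fc_filt M k n \<Longrightarrow> f n x \<in> fc_filt N k n"
  and f_d: "x \<in> fc_mod M n \<Longrightarrow> f (n + 1) (fc_d M n x) = fc_d N n (f n x)"
  using fhom by (simp_all add: is_fhom_def)

end

section \<open>Surjections with acyclic kernel\<close>

definition filt_surj :: "('r, 'a::ab_group_add) fcomplex \<Rightarrow> ('r, 'b::ab_group_add) fcomplex
    \<Rightarrow> (int \<Rightarrow> 'a \<Rightarrow> 'b) \<Rightarrow> nat \<Rightarrow> bool" where
  "filt_surj M N f k \<longleftrightarrow> (\<forall>n. \<forall>y\<in>fc_filt N k n. \<exists>x\<in>fc_filt M k n. f n x = y)"

definition acyclic_kernel :: "('r, 'a::ab_group_add) fcomplex \<Rightarrow> ('r, 'b::ab_group_add) fcomplex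
    \<Rightarrow> (int \<Rightarrow> 'a \<Rightarrow> 'b) \<Rightarrow> nat \<Rightarrow> bool" where
  "acyclic_kernel M N f k \<longleftrightarrow>
     (\<forall>n. \<forall>x\<in>fc_filt M k (n + 1). f (n + 1) x = 0 \<longrightarrow> fc_d M (n + 1) x = 0 \<longrightarrow>
        (\<exists>y\<in>fc_filt M k n. f n y = 0 \<and> fc_d M n y = x))"

context fhom
begin

lemma surj_acyclic_kernel_iff:
  "surj_acyclic_kernel M N f k \<longleftrightarrow> filt_surj M N f k \<and> acyclic_kernel M N f k"
proof -
  have shift: "(\<forall>n::int. P n) \<longleftrightarrow> (\<forall>n. P (n + 1))" for P
    by (metis diff_add_cancel)
  have "(\<forall>n. f n ` fc_filt M k n = fc_filt N k n) \<longleftrightarrow> filt_surj M N f k"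
    unfolding filt_surj_def set_eq_iff image_iff using f_filt by metis
  moreover have "acyclic_kernel M N f k \<longleftrightarrow> (\<forall>n. \<forall>x\<in>fc_filt M k n. f n x = 0 \<and> fc_d M n x = 0 \<longrightarrow>
      (\<exists>y\<in>fc_filt M k (n - 1). f (n - 1) y = 0 \<and> fc_d M (n - 1) y = x))"
    unfolding acyclic_kernel_def by (subst (2) shift) auto
  ultimately show ?thesis
    unfolding surj_acyclic_kernel_def by simp
qed

lemma H_iso_if_surj_acyclic_kernel:
  assumes surj: "filt_surj M N f k" and acyclic: "acyclic_kernel M N f k"
  shows "H_iso M N f k n"
  unfolding H_iso_def
proof (intro conjI ballI impI)
  fix z assume z: "z \<in> cocycles N k n"
  then obtain x0 where x0: "x0 \<in> fc_filt M k n" "f n x0 = z"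
    using surj by (auto simp: filt_surj_def cocycles_def)
  have "f (n + 1) (fc_d M n x0) = 0"
    using z x0 f_d[OF M.filt_mod] by (simp add: cocycles_def)
  then obtain w where w: "w \<in> fc_filt M k n" "f n w = 0" "fc_d M n w = fc_d M n x0"
    using acyclic x0 M.d_filt M.d_d[OF M.filt_mod] unfolding acyclic_kernel_def by blast
  have "x0 - w \<in> cocycles M k n"
    using x0 w M.filt_diff M.d_diff[OF M.filt_mod M.filt_mod] by (simp add: cocycles_def)
  moreover have "f n (x0 - w) = z"
    using x0 w f_diff[OF M.filt_mod M.filt_mod] by simp
  ultimately show "\<exists>x\<in>cocycles M k n. f n x - z \<in> coboundaries N k n"
    by force
next
  fix x assume x: "x \<in> cocycles M k n" and fx: "f n x \<in> coboundaries N k n"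
  obtain m where n: "n = m + 1"
    by (metis diff_add_cancel)
  obtain u where u: "u \<in> fc_filt N k m" "f n x = fc_d N m u"
    using fx by (auto simp: n N.coboundaries_succ)
  obtain v where v: "v \<in> fc_filt M k m" "f m v = u"
    using surj u(1) by (auto simp: filt_surj_def)
  let ?c = "x - fc_d M m v"
  have x': "x \<in> fc_filt M k n" "fc_d M n x = 0" and dv: "fc_d M m v \<in> fc_filt M k n"
    using x v M.d_filt by (auto simp: n cocycles_def)
  have "?c \<in> fc_filt M k n"
    using x' dv M.filt_diff by blast
  moreover have "f n ?c = 0"
    using u v x' dv f_diff[OF M.filt_mod M.filt_mod] f_d[OF M.filt_mod] by (simp add: n)
  moreover have "fc_d M n ?c = 0"
    using v x' dv M.d_diff[OF M.filt_mod M.filt_mod] M.d_d[OF M.filt_mod] by (simp add: n)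
  ultimately obtain w where w: "w \<in> fc_filt M k m" "fc_d M m w = ?c"
    using acyclic unfolding acyclic_kernel_def n by blast
  have "fc_d M m (v + w) = x"
    using v w M.d_add[OF M.filt_mod M.filt_mod] by simp
  then show "x \<in> coboundaries M k n"
    using v w M.filt_add by (force simp: n M.coboundaries_succ)
qed

lemma acyclic_kernel_if_H_iso:
  assumes surj: "filt_surj M N f k" and H: "\<And>n. H_iso M N f k n"
  shows "acyclic_kernel M N f k"
  unfolding acyclic_kernel_def
proof (intro allI ballI impI)
  fix n x assume x: "x \<in> fc_filt M k (n + 1)" "f (n + 1) x = 0" "fc_d M (n + 1) x = 0"
  then have "x \<in> coboundaries M k (n + 1)"
    using H[of "n + 1"] by (simp add: H_iso_def cocycles_def)
  then obtain v where v: "v \<in> fc_filt M k n" "fc_d M n v = x"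
    by (auto simp: M.coboundaries_succ)
  have "f n v \<in> cocycles N k n"
    using v x f_filt f_d[OF M.filt_mod] by (auto simp: cocycles_def)
  then obtain c where c: "c \<in> fc_filt M k n" "fc_d M n c = 0"
      and fc: "f n c - f n v \<in> coboundaries N k n"
    using H[of n] by (auto simp: H_iso_def cocycles_def)
  obtain m where n: "n = m + 1"
    by (metis diff_add_cancel)
  obtain u where u: "u \<in> fc_filt N k m" "f n c - f n v = fc_d N m u"
    using fc by (auto simp: n N.coboundaries_succ)
  obtain t where t: "t \<in> fc_filt M k m" "f m t = u"
    using surj u(1) by (auto simp: filt_surj_def)
  \<comment> \<open>Correct the primitive \<open>v\<close> of \<open>x\<close> by the cocycle \<open>c\<close> and the coboundary \<open>d t\<close> to land in the kernel.\<close>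
  let ?y = "v - c + fc_d M m t"
  have dt: "fc_d M m t \<in> fc_filt M k n"
    using t M.d_filt by (simp add: n)
  have vc: "v - c \<in> fc_filt M k n"
    using v c M.filt_diff by blast
  have "f n ?y = f n v - f n c + fc_d N m u"
    using v c t f_add[OF M.filt_mod[OF vc] M.filt_mod[OF dt]] f_diff[OF M.filt_mod M.filt_mod]
      f_d[OF M.filt_mod[OF t(1)]] by (simp add: n)
  then have "f n ?y = 0"
    by (simp add: u(2)[symmetric])
  moreover have "fc_d M n ?y = x"
    using v c M.d_add[OF M.filt_mod[OF vc] M.filt_mod[OF dt]] M.d_diff[OF M.filt_mod M.filt_mod]
      M.d_d[OF M.filt_mod[OF t(1)]] by (simp add: n)
  moreover have "?y \<in> fc_filt M k n"
    using vc dt M.filt_add by blast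
  ultimately show "\<exists>y\<in>fc_filt M k n. f n y = 0 \<and> fc_d M n y = x"
    by blast
qed

lemma weak_equiv_iff_acyclic_kernel:
  assumes "\<And>k. filt_surj M N f k"
  shows "weak_equiv M N f \<longleftrightarrow> (\<forall>k. acyclic_kernel M N f k)"
  using assms H_iso_if_surj_acyclic_kernel acyclic_kernel_if_H_iso
  unfolding weak_equiv_def by blast

end

definition lifts_cocycles :: "('r, 'a::ab_group_add) fcomplex \<Rightarrow> ('r, 'b::ab_group_add) fcomplex
    \<Rightarrow> (int \<Rightarrow> 'a \<Rightarrow> 'b) \<Rightarrow> nat \<Rightarrow> int \<Rightarrow> bool" where
  "lifts_cocycles M N f p n \<longleftrightarrow>
     (\<forall>z\<in>cocycles M p (n + 1). \<forall>y\<in>fc_filt N p n. f (n + 1) z = fc_d N n y \<longrightarrow>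
        (\<exists>x\<in>fc_filt M p n. fc_d M n x = z \<and> f n x = y))"

context fhom
begin

lemma lifts_cocycles_if_surj_acyclic_kernel:
  assumes surj: "filt_surj M N f p" and acyclic: "acyclic_kernel M N f p"
  shows "lifts_cocycles M N f p n"
  unfolding lifts_cocycles_def
proof (intro ballI impI)
  fix z y assume z: "z \<in> cocycles M p (n + 1)" and y: "y \<in> fc_filt N p n"
    and fz: "f (n + 1) z = fc_d N n y"
  obtain x0 where x0: "x0 \<in> fc_filt M p n" "f n x0 = y"
    using surj y by (auto simp: filt_surj_def)
  let ?c = "z - fc_d M n x0"
  have z': "z \<in> fc_filt M p (n + 1)" "fc_d M (n + 1) z = 0"
    using z by (auto simp: cocycles_def)
  have dx0: "fc_d M n x0 \<in> fc_filt M p (n + 1)"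
    using x0 M.d_filt by blast
  have "?c \<in> fc_filt M p (n + 1)"
    using z' dx0 M.filt_diff by blast
  moreover have "f (n + 1) ?c = 0"
    using fz x0 f_diff[OF M.filt_mod[OF z'(1)] M.filt_mod[OF dx0]] f_d[OF M.filt_mod[OF x0(1)]]
    by simp
  moreover have "fc_d M (n + 1) ?c = 0"
    using z' M.d_diff[OF M.filt_mod[OF z'(1)] M.filt_mod[OF dx0]] M.d_d[OF M.filt_mod[OF x0(1)]]
    by simp
  ultimately obtain w where w: "w \<in> fc_filt M p n" "f n w = 0" "fc_d M n w = ?c"
    using acyclic unfolding acyclic_kernel_def by blast
  have "fc_d M n (x0 + w) = z" "f n (x0 + w) = y"
    using x0 w M.d_add[OF M.filt_mod M.filt_mod] f_add[OF M.filt_mod M.filt_mod] by simp_all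
  then show "\<exists>x\<in>fc_filt M p n. fc_d M n x = z \<and> f n x = y"
    using x0 w M.filt_add by blast
qed

lemma surj_if_lifts_cocycles:
  assumes "\<And>n. lifts_cocycles M N f p n"
  shows "filt_surj M N f p"
  unfolding filt_surj_def
proof (intro allI ballI)
  fix n y assume y: "y \<in> fc_filt N p n"
  \<comment> \<open>Lifting \<open>(0, d y)\<close> one degree up yields a cocycle \<open>z\<close> over \<open>d y\<close>; then lift \<open>(z, y)\<close>.\<close>
  have "0 \<in> cocycles M p (n + 1 + 1)" "fc_d N n y \<in> fc_filt N p (n + 1)"
    "f (n + 1 + 1) 0 = fc_d N (n + 1) (fc_d N n y)"
    using y N.d_filt N.d_d[OF N.filt_mod] by (simp_all add: cocycles_def)
  then obtain z where z: "z \<in> fc_filt M p (n + 1)" "fc_d M (n + 1) z = 0"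
      "f (n + 1) z = fc_d N n y"
    using assms[of "n + 1"] unfolding lifts_cocycles_def by blast
  then show "\<exists>x\<in>fc_filt M p n. f n x = y"
    using assms[of n] y unfolding lifts_cocycles_def cocycles_def by blast
qed

lemma acyclic_kernel_if_lifts_cocycles:
  assumes "\<And>n. lifts_cocycles M N f p n"
  shows "acyclic_kernel M N f p"
  unfolding acyclic_kernel_def
proof (intro allI ballI impI)
  fix n x assume "x \<in> fc_filt M p (n + 1)" "f (n + 1) x = 0" "fc_d M (n + 1) x = 0"
  then have "x \<in> cocycles M p (n + 1)" "f (n + 1) x = fc_d N n 0"
    by (simp_all add: cocycles_def)
  then show "\<exists>y\<in>fc_filt M p n. f n y = 0 \<and> fc_d M n y = x"
    using assms[of n] N.filt_zero unfolding lifts_cocycles_def by blast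
qed

lemma lifts_cocycles_iff:
  "(\<forall>n. lifts_cocycles M N f p n) \<longleftrightarrow> filt_surj M N f p \<and> acyclic_kernel M N f p"
  using lifts_cocycles_if_surj_acyclic_kernel surj_if_lifts_cocycles
    acyclic_kernel_if_lifts_cocycles by blast

end

section \<open>Lifting against the generating maps\<close>

definition D_map :: "('r::comm_ring_1, 'a::ab_group_add) fcomplex \<Rightarrow> int \<Rightarrow> 'a \<Rightarrow> int \<Rightarrow> 'r \<Rightarrow> 'a" where
  "D_map M n x = (\<lambda>m r. if m = n then fc_scale M r x
     else if m = n + 1 then fc_scale M r (fc_d M n x) else 0)"

definition S_map :: "('r::comm_ring_1, 'a::ab_group_add) fcomplex \<Rightarrow> int \<Rightarrow> 'a \<Rightarrow> int \<Rightarrow> 'r \<Rightarrow> 'a" where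
  "S_map M n z = (\<lambda>m r. if m = n then fc_scale M r z else 0)"

context fcomplex
begin

lemma fhom_eq_scale_generator:
  assumes "is_fhom A M b" "fc_scale A = (*)" "1 \<in> fc_mod A m"
  shows "b m r = fc_scale M r (b m 1)"
  using assms unfolding is_fhom_def linear_on_def by (metis mult.right_neutral)

lemma fhom_zero:
  assumes "is_fhom A M b" "0 \<in> fc_mod A m"
  shows "b m 0 = 0"
  using assms linear_on_zero unfolding is_fhom_def by blast

lemma fhom_zero_cpx: "is_fhom zero_cpx M (\<lambda>m r. 0)"
  unfolding is_fhom_def linear_on_def zero_cpx_def
  using scale.subspace_0[OF subspace_mod] by simp

lemma fhom_D_map:
  assumes x: "x \<in> fc_filt M p n"
  shows "is_fhom (D_cpx n p) M (D_map M n x)"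
  unfolding is_fhom_def
proof (intro conjI allI ballI)
  fix m
  show "linear_on (fc_scale (D_cpx n p)) (fc_scale M) (fc_mod (D_cpx n p) m) (D_map M n x m)"
    by (simp add: linear_on_def D_map_def D_cpx_def scale.scale_left_distrib)
next
  fix m and r :: 'r assume "r \<in> fc_mod (D_cpx n p) m"
  show "D_map M n x m r \<in> fc_mod M m"
    using filt_mod[OF x] filt_mod[OF d_filt[OF x]] scale.subspace_scale[OF subspace_mod]
      scale.subspace_0[OF subspace_mod] by (auto simp: D_map_def)
next
  fix m and r :: 'r assume "r \<in> fc_mod (D_cpx n p) m"
  then show "D_map M n x (m + 1) (fc_d (D_cpx n p) m r) = fc_d M m (D_map M n x m r)"
    using d_scale[OF filt_mod[OF x]] d_scale[OF filt_mod[OF d_filt[OF x]]] d_d[OF filt_mod[OF x]]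
    by (auto simp: D_map_def D_cpx_def)
next
  fix k m and r :: 'r assume "r \<in> fc_filt (D_cpx n p) k m"
  moreover have "k \<le> p \<Longrightarrow> x \<in> fc_filt M k n"
    using x filt_antimono by blast
  ultimately show "D_map M n x m r \<in> fc_filt M k m"
    using d_filt filt_scale by (auto simp: D_map_def D_cpx_def split: if_splits)
qed

lemma fhom_S_map:
  assumes z: "z \<in> cocycles M p n"
  shows "is_fhom (S_cpx n p) M (S_map M n z)"
  unfolding is_fhom_def
proof (intro conjI allI ballI)
  fix m
  show "linear_on (fc_scale (S_cpx n p)) (fc_scale M) (fc_mod (S_cpx n p) m) (S_map M n z m)"
    by (simp add: linear_on_def S_map_def S_cpx_def scale.scale_left_distrib)
next
  fix m and r :: 'r assume "r \<in> fc_mod (S_cpx n p) m"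
  show "S_map M n z m r \<in> fc_mod M m"
    using z filt_mod scale.subspace_scale[OF subspace_mod] scale.subspace_0[OF subspace_mod]
    by (auto simp: S_map_def cocycles_def)
next
  fix m and r :: 'r assume "r \<in> fc_mod (S_cpx n p) m"
  then show "S_map M n z (m + 1) (fc_d (S_cpx n p) m r) = fc_d M m (S_map M n z m r)"
    using z d_scale[OF filt_mod] by (auto simp: S_map_def S_cpx_def cocycles_def)
next
  fix k m and r :: 'r assume "r \<in> fc_filt (S_cpx n p) k m"
  moreover have "k \<le> p \<Longrightarrow> z \<in> fc_filt M k n"
    using z filt_antimono by (auto simp: cocycles_def)
  ultimately show "S_map M n z m r \<in> fc_filt M k m"
    using filt_scale by (auto simp: S_map_def S_cpx_def split: if_splits)
qed

lemma fhom_D_cpx_generator: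
  assumes "is_fhom (D_cpx n p) M b"
  shows "b n 1 \<in> fc_filt M p n"
proof -
  have "1 \<in> fc_filt (D_cpx n p) p n"
    by (simp add: D_cpx_def)
  then show ?thesis
    using assms unfolding is_fhom_def by blast
qed

lemma fhom_S_cpx_generator:
  assumes a: "is_fhom (S_cpx n p) M a"
  shows "a n 1 \<in> cocycles M p n"
proof -
  have "1 \<in> fc_filt (S_cpx n p) p n" "1 \<in> fc_mod (S_cpx n p) n"
    by (simp_all add: S_cpx_def)
  then have "a n 1 \<in> fc_filt M p n" "a (n + 1) (fc_d (S_cpx n p) n 1) = fc_d M n (a n 1)"
    using a unfolding is_fhom_def by blast+
  moreover have "a (n + 1) 0 = 0"
    using fhom_zero[OF a] by (simp add: S_cpx_def)
  ultimately show ?thesis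
    by (simp add: cocycles_def S_cpx_def)
qed

lemma fhom_D_cpx_eq_D_map:
  assumes b: "is_fhom (D_cpx n p) M b" and r: "r \<in> fc_mod (D_cpx n p) m"
  shows "b m r = D_map M n (b n 1) m r"
proof -
  have scale: "b k r = fc_scale M r (b k 1)" if "k = n \<or> k = n + 1" for k
    by (rule fhom_eq_scale_generator[OF b]) (use that in \<open>auto simp: D_cpx_def\<close>)
  have "1 \<in> fc_mod (D_cpx n p) n"
    by (simp add: D_cpx_def)
  then have "b (n + 1) (fc_d (D_cpx n p) n 1) = fc_d M n (b n 1)"
    using b unfolding is_fhom_def by blast
  then have "b (n + 1) 1 = fc_d M n (b n 1)"
    by (simp add: D_cpx_def)
  moreover have "b m r = 0" if "m \<noteq> n" "m \<noteq> n + 1"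
  proof -
    have "r = 0"
      using r that by (simp add: D_cpx_def split: if_splits)
    with that show ?thesis
      using fhom_zero[OF b] by (simp add: D_cpx_def)
  qed
  ultimately show ?thesis
    using scale by (simp add: D_map_def)
qed

lemma fhom_S_cpx_eq_S_map:
  assumes a: "is_fhom (S_cpx n p) M a" and r: "r \<in> fc_mod (S_cpx n p) m"
  shows "a m r = S_map M n (a n 1) m r"
proof (cases "m = n")
  case True
  have "a m r = fc_scale M r (a m 1)"
    by (rule fhom_eq_scale_generator[OF a]) (use True in \<open>simp_all add: S_cpx_def\<close>)
  with True show ?thesis
    by (simp add: S_map_def)
next
  case False
  then have "r = 0"
    using r by (simp add: S_cpx_def split: if_splits)
  with False show ?thesis
    using fhom_zero[OF a] by (simp add: S_map_def S_cpx_def)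
qed

lemma D_map_eq_S_map:
  assumes "r \<in> fc_mod (S_cpx (n + 1) p) m"
  shows "D_map M n x m r = S_map M (n + 1) (fc_d M n x) m r"
  using assms by (auto simp: D_map_def S_map_def S_cpx_def split: if_splits)

end

context fhom
begin

lemma f_D_map:
  assumes "x \<in> fc_mod M n"
  shows "f m (D_map M n x m r) = D_map N n (f n x) m r"
  using assms f_scale f_d M.d_mod by (simp add: D_map_def)

lemma f_S_map:
  assumes "z \<in> fc_mod M n"
  shows "f m (S_map M n z m r) = S_map N n (f n z) m r"
  using assms f_scale by (simp add: S_map_def)

lemma f_comp_D_map:
  assumes b: "is_fhom (D_cpx n p) N b" and x: "x \<in> fc_mod M n" and fx: "f n x = b n 1"
    and r: "r \<in> fc_mod (D_cpx n p) m"
  shows "f m (D_map M n x m r) = b m r"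
  using f_D_map[OF x] N.fhom_D_cpx_eq_D_map[OF b r] fx by simp

lemma has_rlp_zero_D_iff:
  "has_rlp (zero_cpx :: ('r, 'r) fcomplex) (D_cpx n p) (\<lambda>m x. 0) M N f \<longleftrightarrow>
     (\<forall>y\<in>fc_filt N p n. \<exists>x\<in>fc_filt M p n. f n x = y)"
proof
  assume rlp: "has_rlp (zero_cpx :: ('r, 'r) fcomplex) (D_cpx n p) (\<lambda>m x. 0) M N f"
  show "\<forall>y\<in>fc_filt N p n. \<exists>x\<in>fc_filt M p n. f n x = y"
  proof
    fix y assume y: "y \<in> fc_filt N p n"
    have "\<forall>m. \<forall>r\<in>fc_mod (zero_cpx :: ('r, 'r) fcomplex) m. f m 0 = D_map N n y m 0"
      by (simp add: D_map_def)
    then obtain h where h: "is_fhom (D_cpx n p) M h"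
        "\<forall>m. \<forall>r\<in>fc_mod (D_cpx n p) m. f m (h m r) = D_map N n y m r"
      using rlp M.fhom_zero_cpx N.fhom_D_map[OF y] unfolding has_rlp_def by blast
    then have "f n (h n 1) = y"
      by (simp add: D_cpx_def D_map_def)
    then show "\<exists>x\<in>fc_filt M p n. f n x = y"
      using M.fhom_D_cpx_generator[OF h(1)] by blast
  qed
next
  assume surj: "\<forall>y\<in>fc_filt N p n. \<exists>x\<in>fc_filt M p n. f n x = y"
  show "has_rlp (zero_cpx :: ('r, 'r) fcomplex) (D_cpx n p) (\<lambda>m x. 0) M N f"
    unfolding has_rlp_def
  proof (intro allI impI, elim conjE)
    fix a b assume a: "is_fhom (zero_cpx :: ('r, 'r) fcomplex) M a" and b: "is_fhom (D_cpx n p) N b"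
    obtain x where x: "x \<in> fc_filt M p n" "f n x = b n 1"
      using surj N.fhom_D_cpx_generator[OF b] by blast
    have "\<forall>m. \<forall>r\<in>fc_mod (zero_cpx :: ('r, 'r) fcomplex) m. D_map M n x m 0 = a m r"
      using M.fhom_zero[OF a] by (simp add: D_map_def zero_cpx_def)
    moreover have "\<forall>m. \<forall>r\<in>fc_mod (D_cpx n p) m. f m (D_map M n x m r) = b m r"
      using f_comp_D_map[OF b M.filt_mod[OF x(1)] x(2)] by blast
    ultimately show "\<exists>h. is_fhom (D_cpx n p) M h \<and>
        (\<forall>m. \<forall>r\<in>fc_mod (zero_cpx :: ('r, 'r) fcomplex) m. h m 0 = a m r) \<and>
        (\<forall>m. \<forall>r\<in>fc_mod (D_cpx n p) m. f m (h m r) = b m r)"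
      using M.fhom_D_map[OF x(1)] by blast
  qed
qed

lemma has_rlp_S_D_iff:
  "has_rlp (S_cpx (n + 1) p :: ('r, 'r) fcomplex) (D_cpx n p) (\<lambda>m x. x) M N f \<longleftrightarrow>
     lifts_cocycles M N f p n"
proof
  assume rlp: "has_rlp (S_cpx (n + 1) p :: ('r, 'r) fcomplex) (D_cpx n p) (\<lambda>m x. x) M N f"
  show "lifts_cocycles M N f p n"
    unfolding lifts_cocycles_def
  proof (intro ballI impI)
    fix z y assume z: "z \<in> cocycles M p (n + 1)" and y: "y \<in> fc_filt N p n"
      and fz: "f (n + 1) z = fc_d N n y"
    have "\<forall>m. \<forall>r\<in>fc_mod (S_cpx (n + 1) p :: ('r, 'r) fcomplex) m.
        f m (S_map M (n + 1) z m r) = D_map N n y m r"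
      using f_S_map[OF M.filt_mod, of z p "n + 1"] z N.D_map_eq_S_map fz by (simp add: cocycles_def)
    then obtain h where h: "is_fhom (D_cpx n p) M h"
        "\<forall>m. \<forall>r\<in>fc_mod (S_cpx (n + 1) p :: ('r, 'r) fcomplex) m. h m r = S_map M (n + 1) z m r"
        "\<forall>m. \<forall>r\<in>fc_mod (D_cpx n p) m. f m (h m r) = D_map N n y m r"
      using rlp M.fhom_S_map[OF z] N.fhom_D_map[OF y] unfolding has_rlp_def by blast
    have "h (n + 1) 1 = z"
      using h(2) by (simp add: S_cpx_def S_map_def)
    moreover have "h (n + 1) 1 = fc_d M n (h n 1)"
      using M.fhom_D_cpx_eq_D_map[OF h(1), of 1 "n + 1"] by (simp add: D_cpx_def D_map_def)
    moreover have "f n (h n 1) = y"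
      using h(3) by (simp add: D_cpx_def D_map_def)
    ultimately show "\<exists>x\<in>fc_filt M p n. fc_d M n x = z \<and> f n x = y"
      using M.fhom_D_cpx_generator[OF h(1)] by metis
  qed
next
  assume lifts: "lifts_cocycles M N f p n"
  show "has_rlp (S_cpx (n + 1) p :: ('r, 'r) fcomplex) (D_cpx n p) (\<lambda>m x. x) M N f"
    unfolding has_rlp_def
  proof (intro allI impI, elim conjE)
    fix a b assume a: "is_fhom (S_cpx (n + 1) p :: ('r, 'r) fcomplex) M a"
      and b: "is_fhom (D_cpx n p) N b"
      and comm: "\<forall>m. \<forall>r\<in>fc_mod (S_cpx (n + 1) p :: ('r, 'r) fcomplex) m. f m (a m r) = b m r"
    have "f (n + 1) (a (n + 1) 1) = b (n + 1) 1"
      using comm by (simp add: S_cpx_def)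
    also have "\<dots> = fc_d N n (b n 1)"
      using N.fhom_D_cpx_eq_D_map[OF b, of 1 "n + 1"] by (simp add: D_cpx_def D_map_def)
    finally obtain x where x: "x \<in> fc_filt M p n" "fc_d M n x = a (n + 1) 1" "f n x = b n 1"
      using lifts M.fhom_S_cpx_generator[OF a] N.fhom_D_cpx_generator[OF b]
      unfolding lifts_cocycles_def by blast
    have "\<forall>m. \<forall>r\<in>fc_mod (S_cpx (n + 1) p :: ('r, 'r) fcomplex) m. D_map M n x m r = a m r"
      using M.D_map_eq_S_map M.fhom_S_cpx_eq_S_map[OF a] x(2) by simp
    moreover have "\<forall>m. \<forall>r\<in>fc_mod (D_cpx n p) m. f m (D_map M n x m r) = b m r"
      using f_comp_D_map[OF b M.filt_mod[OF x(1)] x(3)] by blast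
    ultimately show "\<exists>h. is_fhom (D_cpx n p) M h \<and>
        (\<forall>m. \<forall>r\<in>fc_mod (S_cpx (n + 1) p :: ('r, 'r) fcomplex) m. h m r = a m r) \<and>
        (\<forall>m. \<forall>r\<in>fc_mod (D_cpx n p) m. f m (h m r) = b m r)"
      using M.fhom_D_map[OF x(1)] by blast
  qed
qed

lemma J_inj_iff_filt_surj: "J_inj M N f \<longleftrightarrow> (\<forall>k. filt_surj M N f k)"
  unfolding J_inj_def filt_surj_def has_rlp_zero_D_iff by blast

lemma I_inj_iff_lifts_cocycles: "I_inj M N f \<longleftrightarrow> (\<forall>p n. lifts_cocycles M N f p n)"
  unfolding I_inj_def has_rlp_S_D_iff by blast

end

theorem proposition1p20:
  fixes M :: "('r::comm_ring_1, 'a::ab_group_add) fcomplex"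
    and N :: "('r, 'b::ab_group_add) fcomplex"
    and f :: "int \<Rightarrow> 'a \<Rightarrow> 'b"
  assumes "is_fcomplex M" and "is_fcomplex N" and "is_fhom M N f"
  shows "(trivial_fibration M N f \<longleftrightarrow> (\<forall>k. surj_acyclic_kernel M N f k))
     \<and> (weak_equiv M N f \<and> J_inj M N f \<longleftrightarrow> I_inj M N f)"
proof -
  interpret fhom M N f
    using assms by unfold_locales
  let ?surj_acyclic = "\<forall>k. filt_surj M N f k \<and> acyclic_kernel M N f k"
  have "weak_equiv M N f \<and> J_inj M N f \<longleftrightarrow> ?surj_acyclic"
    using weak_equiv_iff_acyclic_kernel by (auto simp: J_inj_iff_filt_surj)
  moreover have "(\<forall>k. surj_acyclic_kernel M N f k) \<longleftrightarrow> ?surj_acyclic"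
    by (simp add: surj_acyclic_kernel_iff)
  moreover have "I_inj M N f \<longleftrightarrow> ?surj_acyclic"
    by (simp add: I_inj_iff_lifts_cocycles lifts_cocycles_iff[symmetric])
  ultimately show ?thesis
    unfolding trivial_fibration_def by blast
qed

end
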